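(* Let $(G,X,\Gamma)$ be a $(\mu,\nu)$-path system group containing a $\delta$-constricting element $(g,A)$. There exist $\theta\ge1$ and an integer $M\in[1,\theta]$ such that for every $u\in G$ the following are equivalent: (I) $u\in E(g,A)$; (II) there exists $p\in\{-1,1\}$ with $ug^Mu^{-1}=g^{pM}$; (III) there exist $m,n\in\mathbb Z\setminus\{0\}$ with $ug^mu^{-1}=g^n$. Moreover, setting $E^+(g,A)=\{u\in G: ug^Mu^{-1}=g^M\}$, we have $[E(g,A):E^+(g,A)]\le2$.
   Context: A path is a rectifiable continuous map $\alpha\colon[a,b]\to X$ parametrised by arc length; it is a $(\kappa,\lambda)$-quasi-geodesic if $d(\alpha(t),\alpha(t'))\le|t-t'|\le\kappa d(\alpha(t),\alpha(t'))+\lambda$. A $(\mu,\nu)$-path system group $(G,X,\Gamma)$ is a group $G$ acting properly by isometries on a geodesic metric space $X$ together with a $G$-invariant collection $\Gamma$ of paths closed under subpaths, such that any two points are joined by an element of $\Gamma$ and every element is a $(\mu,\nu)$-quasi-geodesic. A map $\pi_A\colon X\to A$ is $\delta$-constricting if (CS1) $d(x,\pi_A(x))\le\delta$ for $x\in A$, and (CS2) for all $x,y\in X$ and $\gamma\in\Gamma$ joining them, if $d(\pi_A(x),\pi_A(y))>\delta$ then $\gamma$ meets $B_X(\pi_A(x),\delta)$ and $B_X(\pi_A(y),\delta)$. An element $g$ is $\delta$-constricting, written $(g,A)$, if it has infinite order and $A$ is a $\langle g\rangle$-invariant subset admitting a $\delta$-constricting map, on which $\langle g\rangle$ acts $\delta$-coboundedly.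 The elementary closure is $E(g,A)=\{u\in G: d_{Haus}(uA,A)<\infty\}$, $d_{Haus}$ denoting Hausdorff distance. *)

theory Defs
  imports "HOL-Analysis.Analysis" "HOL-Algebra.Algebra"
begin

text \<open>A path is represented by a triple (a, b, alpha) with alpha :: real => X,
  only its values on the interval [a,b] being relevant.\<close>

type_synonym 'x rpath = "real \<times> real \<times> (real \<Rightarrow> 'x)"

definition geodesic_space :: "'x::metric_space itself \<Rightarrow> bool" where
  "geodesic_space _ \<longleftrightarrow>
     (\<forall>x y::'x. \<exists>\<gamma>::real \<Rightarrow> 'x. \<gamma> 0 = x \<and> \<gamma> (dist x y) = y \<and>
        (\<forall>s\<in>{0..dist x y}. \<forall>t\<in>{0..dist x y}. dist (\<gamma> s) (\<gamma> t) = \<bar>s - t\<bar>))"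

definition curve_length :: "(real \<Rightarrow> 'x::metric_space) \<Rightarrow> real \<Rightarrow> real \<Rightarrow> ereal" where
  "curve_length \<alpha> a b =
     (SUP ts \<in> {ts. sorted ts \<and> set ts \<subseteq> {a..b}}.
        ereal (\<Sum>i<length ts - 1. dist (\<alpha> (ts ! i)) (\<alpha> (ts ! Suc i))))"

definition is_path :: "'x::metric_space rpath \<Rightarrow> bool" where
  "is_path p \<longleftrightarrow> (case p of (a, b, \<alpha>) \<Rightarrow>
     a \<le> b \<and> continuous_on {a..b} \<alpha> \<and> curve_length \<alpha> a b < \<infinity> \<and>
     (\<forall>s t. a \<le> s \<and> s \<le> t \<and> t \<le> b \<longrightarrow> curve_length \<alpha> s t = ereal (t - s)))"

definition quasi_geodesic :: "real \<Rightarrow> real \<Rightarrow> 'x::metric_space rpath \<Rightarrow> bool" where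
  "quasi_geodesic \<kappa> lam p \<longleftrightarrow> is_path p \<and> (case p of (a, b, \<alpha>) \<Rightarrow>
     (\<forall>t\<in>{a..b}. \<forall>t'\<in>{a..b}. dist (\<alpha> t) (\<alpha> t') \<le> \<bar>t - t'\<bar> \<and>
        \<bar>t - t'\<bar> \<le> \<kappa> * dist (\<alpha> t) (\<alpha> t') + lam))"

definition isometric_action :: "('g, 'b) monoid_scheme \<Rightarrow> ('g \<Rightarrow> 'x::metric_space \<Rightarrow> 'x) \<Rightarrow> bool" where
  "isometric_action G \<phi> \<longleftrightarrow> group G \<and>
     (\<forall>g\<in>carrier G. \<forall>x y. dist (\<phi> g x) (\<phi> g y) = dist x y) \<and>
     (\<forall>x. \<phi> \<one>\<^bsub>G\<^esub> x = x) \<and>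
     (\<forall>g\<in>carrier G. \<forall>h\<in>carrier G. \<forall>x. \<phi> (g \<otimes>\<^bsub>G\<^esub> h) x = \<phi> g (\<phi> h x))"

definition proper_action :: "('g, 'b) monoid_scheme \<Rightarrow> ('g \<Rightarrow> 'x::metric_space \<Rightarrow> 'x) \<Rightarrow> bool" where
  "proper_action G \<phi> \<longleftrightarrow> (\<forall>x r. finite {g \<in> carrier G. dist x (\<phi> g x) \<le> r})"

definition path_system_group ::
  "real \<Rightarrow> real \<Rightarrow> ('g, 'b) monoid_scheme \<Rightarrow> ('g \<Rightarrow> 'x::metric_space \<Rightarrow> 'x) \<Rightarrow> 'x rpath set \<Rightarrow> bool" where
  "path_system_group \<mu> \<nu> G \<phi> \<Gamma> \<longleftrightarrow>
     geodesic_space TYPE('x) \<and> isometric_action G \<phi> \<and> proper_action G \<phi> \<and>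
     (\<forall>a b \<alpha> g. (a, b, \<alpha>) \<in> \<Gamma> \<and> g \<in> carrier G \<longrightarrow> (a, b, \<phi> g \<circ> \<alpha>) \<in> \<Gamma>) \<and>
     (\<forall>a b \<alpha> c d. (a, b, \<alpha>) \<in> \<Gamma> \<and> a \<le> c \<and> c \<le> d \<and> d \<le> b \<longrightarrow> (c, d, \<alpha>) \<in> \<Gamma>) \<and>
     (\<forall>x y. \<exists>a b \<alpha>. (a, b, \<alpha>) \<in> \<Gamma> \<and> \<alpha> a = x \<and> \<alpha> b = y) \<and>
     (\<forall>p\<in>\<Gamma>. quasi_geodesic \<mu> \<nu> p)"

definition constricting_map :: "'x::metric_space rpath set \<Rightarrow> real \<Rightarrow> 'x set \<Rightarrow> ('x \<Rightarrow> 'x) \<Rightarrow> bool" where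
  "constricting_map \<Gamma> \<delta> A \<pi> \<longleftrightarrow>
     (\<forall>x. \<pi> x \<in> A) \<and>
     (\<forall>x\<in>A. dist x (\<pi> x) \<le> \<delta>) \<and>
     (\<forall>x y a b \<alpha>. (a, b, \<alpha>) \<in> \<Gamma> \<and> \<alpha> a = x \<and> \<alpha> b = y \<and> dist (\<pi> x) (\<pi> y) > \<delta> \<longrightarrow>
        (\<exists>t\<in>{a..b}. dist (\<alpha> t) (\<pi> x) \<le> \<delta>) \<and> (\<exists>t\<in>{a..b}. dist (\<alpha> t) (\<pi> y) \<le> \<delta>))"

definition constricting_element ::
  "('g, 'b) monoid_scheme \<Rightarrow> ('g \<Rightarrow> 'x::metric_space \<Rightarrow> 'x) \<Rightarrow> 'x rpath set \<Rightarrow> real \<Rightarrow> 'g \<Rightarrow> 'x set \<Rightarrow> bool" where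
  "constricting_element G \<phi> \<Gamma> \<delta> g A \<longleftrightarrow>
     g \<in> carrier G \<and>
     (\<forall>n::nat. n > 0 \<longrightarrow> g [^]\<^bsub>G\<^esub> n \<noteq> \<one>\<^bsub>G\<^esub>) \<and>
     (\<forall>k::int. \<phi> (g [^]\<^bsub>G\<^esub> k) ` A = A) \<and>
     (\<exists>\<pi>. constricting_map \<Gamma> \<delta> A \<pi>) \<and>
     (\<forall>x\<in>A. \<forall>y\<in>A. \<exists>k::int. dist (\<phi> (g [^]\<^bsub>G\<^esub> k) x) y \<le> \<delta>)"

definition finite_hausdorff :: "'x::metric_space set \<Rightarrow> 'x set \<Rightarrow> bool" where
  "finite_hausdorff B A \<longleftrightarrow>
     (\<exists>r. (\<forall>a\<in>A. \<exists>b\<in>B. dist a b \<le> r) \<and> (\<forall>b\<in>B. \<exists>a\<in>A. dist a b \<le> r))"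

definition elementary_closure ::
  "('g, 'b) monoid_scheme \<Rightarrow> ('g \<Rightarrow> 'x::metric_space \<Rightarrow> 'x) \<Rightarrow> 'x set \<Rightarrow> 'g set" where
  "elementary_closure G \<phi> A = {u \<in> carrier G. finite_hausdorff (\<phi> u ` A) A}"

end

theory Submission
  imports Defs
begin

text \<open>Constricted sets are Morse, so if \<open>uA\<close> is at finite Hausdorff distance from \<open>A\<close> then \<open>u x\<^sub>0\<close>
  lies within a uniform distance of \<open>A\<close>, hence of the orbit \<open>\<langle>g\<rangle>x\<^sub>0\<close>. By properness
  \<open>E(g,A) \<subseteq> \<langle>g\<rangle>F\<close> for a finite \<open>F\<close>, and pigeonholing the powers of \<open>ugu\<^sup>-\<^sup>1\<close> among the
  cosets \<open>\<langle>g\<rangle>f\<close> yields, for every \<open>u \<in> E(g,A)\<close>, a relation \<open>ug\<^sup>mu\<^sup>-\<^sup>1 = g\<^sup>n\<close> with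
  \<open>1 \<le> m \<le> N\<close>. Iterating such relations inside \<open>E(g,A)\<close> and comparing growth forces \<open>|n| = m\<close>,
  so \<open>M = N!\<close> satisfies (II). Conversely, under (III) \<open>u\<close> moves the orbit \<open>\<langle>g\<^sup>m\<rangle>x\<^sub>0\<close>, which is
  coarsely dense in \<open>A\<close>, to within \<open>d(x\<^sub>0, ux\<^sub>0)\<close> of \<open>\<langle>g\<^sup>n\<rangle>x\<^sub>0\<close>. Finally \<open>E\<^sup>+(g,A)\<close> is the
  centraliser of \<open>g\<^sup>M\<close>, and the elements conjugating \<open>g\<^sup>M\<close> to \<open>g\<^sup>\<plusminus>\<^sup>M\<close> form at most two of its
  cosets.\<close>

section \<open>Finite Hausdorff distance\<close>

lemma finite_hausdorff_refl: "finite_hausdorff A A"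
  unfolding finite_hausdorff_def by (intro exI[of _ 0]) auto

lemma finite_hausdorff_commute: "finite_hausdorff A B \<longleftrightarrow> finite_hausdorff B A"
  unfolding finite_hausdorff_def by (metis dist_commute)

lemma finite_hausdorff_trans:
  assumes "finite_hausdorff C B" and "finite_hausdorff B A"
  shows "finite_hausdorff C A"
proof -
  obtain s where s1: "\<forall>b\<in>B. \<exists>c\<in>C. dist b c \<le> s" and s2: "\<forall>c\<in>C. \<exists>b\<in>B. dist b c \<le> s"
    using assms(1) unfolding finite_hausdorff_def by blast
  obtain r where r1: "\<forall>a\<in>A. \<exists>b\<in>B. dist a b \<le> r" and r2: "\<forall>b\<in>B. \<exists>a\<in>A. dist a b \<le> r"
    using assms(2) unfolding finite_hausdorff_def by blast
  have "\<exists>c\<in>C. dist a c \<le> r + s" if a: "a \<in> A" for a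
  proof -
    obtain b where b: "b \<in> B" "dist a b \<le> r" using r1 a by blast
    obtain c where c: "c \<in> C" "dist b c \<le> s" using s1 b(1) by blast
    show ?thesis using b c dist_triangle[of a c b] by (intro bexI[of _ c]) auto
  qed
  moreover have "\<exists>a\<in>A. dist a c \<le> r + s" if c: "c \<in> C" for c
  proof -
    obtain b where b: "b \<in> B" "dist b c \<le> s" using s2 c by blast
    obtain a where a: "a \<in> A" "dist a b \<le> r" using r2 b(1) by blast
    show ?thesis using a b dist_triangle[of a c b] by (intro bexI[of _ a]) auto
  qed
  ultimately show ?thesis unfolding finite_hausdorff_def by blast
qed

lemma finite_hausdorff_isometric_image:
  assumes "\<And>x y. dist (f x) (f y) = dist x y" and "finite_hausdorff B A"
  shows "finite_hausdorff (f ` B) (f ` A)"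
proof -
  obtain r where "\<forall>a\<in>A. \<exists>b\<in>B. dist a b \<le> r" "\<forall>b\<in>B. \<exists>a\<in>A. dist a b \<le> r"
    using assms(2) unfolding finite_hausdorff_def by blast
  then have "\<forall>a\<in>f ` A. \<exists>b\<in>f ` B. dist a b \<le> r" "\<forall>b\<in>f ` B. \<exists>a\<in>f ` A. dist a b \<le> r"
    using assms(1) by fastforce+
  then show ?thesis unfolding finite_hausdorff_def by blast
qed

lemma finite_hausdorff_subset:
  assumes "B \<subseteq> A" and "\<forall>a\<in>A. \<exists>b\<in>B. dist a b \<le> r"
  shows "finite_hausdorff B A"
proof -
  have "\<forall>a\<in>A. \<exists>b\<in>B. dist a b \<le> max 0 r" using assms(2) by (meson max.coboundedI2)
  moreover have "\<forall>b\<in>B. \<exists>a\<in>A. dist a b \<le> max 0 r"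
    using assms(1) by (metis dist_self max.cobounded1 subsetD)
  ultimately show ?thesis unfolding finite_hausdorff_def by blast
qed

lemma finite_hausdorff_range:
  assumes "\<And>i. dist (f i) (h i) \<le> r"
  shows "finite_hausdorff (range f) (range h)"
proof -
  have "\<forall>a\<in>range h. \<exists>b\<in>range f. dist a b \<le> r" "\<forall>b\<in>range f. \<exists>a\<in>range h. dist a b \<le> r"
    using assms by (metis dist_commute rangeE rangeI)+
  then show ?thesis unfolding finite_hausdorff_def by blast
qed

section \<open>Discrete intermediate values and excursions\<close>

lemma int_seq_crossing:
  fixes k :: "nat \<Rightarrow> int"
  assumes "\<And>i. i < n \<Longrightarrow> \<bar>k (Suc i) - k i\<bar> \<le> T" and "k 0 \<le> 0" and "0 \<le> k n" and "0 \<le> T"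
  shows "\<exists>i\<le>n. \<bar>k i\<bar> \<le> T"
  using assms(1,3)
proof (induction n)
  case 0
  then show ?case using assms(2,4) by auto
next
  case (Suc n)
  show ?case
  proof (cases "k (Suc n) \<le> T")
    case True
    then show ?thesis using Suc.prems(2) by (intro exI[of _ "Suc n"]) auto
  next
    case False
    then have "0 \<le> k n" using Suc.prems(1)[of n] by auto
    then show ?thesis using Suc.IH Suc.prems(1) le_Suc_eq by auto
  qed
qed

lemma int_valued_crossing:
  fixes k :: "real \<Rightarrow> int"
  assumes "lo \<le> hi" and "k lo * k hi \<le> 0" and "0 \<le> T"
    and step: "\<And>s s'. s \<in> {lo..hi} \<Longrightarrow> s' \<in> {lo..hi} \<Longrightarrow> \<bar>s - s'\<bar> \<le> 1 \<Longrightarrow> \<bar>k s - k s'\<bar> \<le> T"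
  shows "\<exists>s\<in>{lo..hi}. \<bar>k s\<bar> \<le> T"
proof -
  define n where "n = nat \<lceil>hi - lo\<rceil>"
  define s where "s i = min (lo + real i) hi" for i :: nat
  have s_range: "s i \<in> {lo..hi}" for i using assms(1) unfolding s_def by auto
  have "hi \<le> lo + real n" unfolding n_def using assms(1) by linarith
  then have s_ends: "s 0 = lo" "s n = hi" using assms(1) unfolding s_def by auto
  have steps: "\<bar>c * k (s (Suc i)) - c * k (s i)\<bar> \<le> T" if "\<bar>c\<bar> = 1" for c i
  proof -
    have "\<bar>s (Suc i) - s i\<bar> \<le> 1" unfolding s_def by auto
    then have "\<bar>k (s (Suc i)) - k (s i)\<bar> \<le> T" using step s_range by blast
    then show ?thesis using that by (metis abs_mult mult.left_neutral right_diff_distrib)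
  qed
  have "\<exists>i\<le>n. \<bar>c * k (s i)\<bar> \<le> T" if "\<bar>c\<bar> = 1" "c * k lo \<le> 0" "0 \<le> c * k hi" for c :: int
    using int_seq_crossing[of n "\<lambda>i. c * k (s i)" T] steps[OF that(1)] that(2,3) assms(3) s_ends
    by simp
  moreover have "k lo \<le> 0 \<and> 0 \<le> k hi \<or> 0 \<le> k lo \<and> k hi \<le> 0"
    using assms(2) by (auto simp: mult_le_0_iff)
  ultimately obtain i where "\<bar>k (s i)\<bar> \<le> T"
    by (metis abs_minus abs_one mult_minus1 mult.left_neutral neg_0_le_iff_le neg_le_0_iff_le)
  then show ?thesis using s_range by blast
qed

lemma last_low_point_before:
  fixes f :: "real \<Rightarrow> real"
  assumes "a \<le> t" and "f a \<le> \<eta>" and "\<eta> < f t"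
  obtains s u where "a \<le> s" "s \<le> u" "u \<le> t" "u - s \<le> 2" "f s \<le> \<eta>" "\<forall>r\<in>{u..t}. \<eta> < f r"
proof -
  define L where "L = {s \<in> {a..t}. f s \<le> \<eta>}"
  define l where "l = Sup L"
  have "a \<in> L" using assms unfolding L_def by auto
  moreover have bdd: "bdd_above L" unfolding L_def by (rule bdd_aboveI[of _ t]) auto
  ultimately have "a \<le> l" "l \<le> t" unfolding l_def by (auto intro: cSup_upper cSup_least simp: L_def)
  obtain s where s: "s \<in> L" "l - 1 < s"
    using less_cSup_iff[of L "l - 1"] \<open>a \<in> L\<close> bdd unfolding l_def by auto
  have "s \<le> l" unfolding l_def using cSup_upper[OF s(1) bdd] .
  define u where "u = min t (l + 1)"
  have "\<eta> < f r" if "u \<le> r" "r \<le> t" for r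
  proof (cases "l < r")
    case True
    then have "r \<notin> L" using cSup_upper[OF _ bdd, of r] unfolding l_def by auto
    then show ?thesis using that \<open>a \<le> l\<close> True unfolding L_def by auto
  next
    case False
    then have "r = t" using that unfolding u_def by (auto simp: min_def split: if_splits)
    then show ?thesis using assms(3) by simp
  qed
  then show ?thesis
    using that[of s u] s \<open>s \<le> l\<close> \<open>l \<le> t\<close> unfolding L_def u_def by auto
qed

lemma excursion_interval:
  fixes f :: "real \<Rightarrow> real"
  assumes "a \<le> t" "t \<le> b" "f a \<le> \<eta>" "f b \<le> \<eta>" "\<eta> < f t"
  obtains s1 u1 u2 s2 where "a \<le> s1" "s1 \<le> u1" "u1 \<le> t" "t \<le> u2" "u2 \<le> s2" "s2 \<le> b"
    "u1 - s1 \<le> 2" "s2 - u2 \<le> 2" "f s1 \<le> \<eta>" "f s2 \<le> \<eta>" "\<forall>r\<in>{u1..u2}. \<eta> < f r"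
proof -
  obtain s1 u1 where l: "a \<le> s1" "s1 \<le> u1" "u1 \<le> t" "u1 - s1 \<le> 2" "f s1 \<le> \<eta>" "\<forall>r\<in>{u1..t}. \<eta> < f r"
    using last_low_point_before[of a t f \<eta>] assms by blast
  obtain s u where r: "- b \<le> s" "s \<le> u" "u \<le> - t" "u - s \<le> 2" "f (- s) \<le> \<eta>"
    "\<forall>r\<in>{u..- t}. \<eta> < f (- r)"
    using last_low_point_before[of "- b" "- t" "\<lambda>r. f (- r)" \<eta>] assms by auto
  have "\<forall>r\<in>{t..- u}. \<eta> < f r"
    using r(6) by (metis atLeastAtMost_iff minus_minus neg_le_iff_le)
  then have "\<forall>r\<in>{u1..- u}. \<eta> < f r" using l(6) by force
  then show ?thesis using that[of s1 u1 "- u" "- s"] l r by auto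
qed

lemma power_ratio_unbounded:
  fixes m n c :: int
  assumes "0 < m" and "m < n"
  obtains j :: nat where "c * m ^ j < n ^ j"
proof -
  have "1 < real_of_int n / real_of_int m" using assms by simp
  then obtain j where "real_of_int c < (real_of_int n / real_of_int m) ^ j"
    using real_arch_pow by blast
  then have "real_of_int c * real_of_int m ^ j < real_of_int n ^ j"
    using assms(1) by (simp add: power_divide pos_less_divide_eq)
  then have "c * m ^ j < n ^ j" by (metis of_int_less_iff of_int_mult of_int_power)
  then show ?thesis using that by blast
qed

section \<open>Conjugation of powers\<close>

context group begin

lemma inv_mult_cancel_left [simp]: "x \<in> carrier G \<Longrightarrow> y \<in> carrier G \<Longrightarrow> inv x \<otimes> (x \<otimes> y) = y"
  by (simp add: m_assoc[symmetric])

lemma mult_inv_cancel_left [simp]: "x \<in> carrier G \<Longrightarrow> y \<in> carrier G \<Longrightarrow> x \<otimes> (inv x \<otimes> y) = y"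
  by (simp add: m_assoc[symmetric])

lemma conj_hom: "c \<in> carrier G \<Longrightarrow> (\<lambda>x. c \<otimes> x \<otimes> inv c) \<in> hom G G"
  unfolding hom_def by (simp add: m_assoc)

lemma conj_int_pow:
  assumes "c \<in> carrier G" "x \<in> carrier G"
  shows "c \<otimes> x [^] (k::int) \<otimes> inv c = (c \<otimes> x \<otimes> inv c) [^] k"
  using hom_int_pow[OF conj_hom[OF assms(1)] assms(2) is_group is_group] by simp

lemma conj_mult:
  "a \<in> carrier G \<Longrightarrow> b \<in> carrier G \<Longrightarrow> y \<in> carrier G \<Longrightarrow>
   (a \<otimes> b) \<otimes> y \<otimes> inv (a \<otimes> b) = a \<otimes> (b \<otimes> y \<otimes> inv b) \<otimes> inv a"
  by (simp add: inv_mult_group m_assoc)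

lemma conj_inverse:
  "c \<in> carrier G \<Longrightarrow> x \<in> carrier G \<Longrightarrow> c \<otimes> x \<otimes> inv c = y \<Longrightarrow> inv c \<otimes> y \<otimes> inv (inv c) = x"
  by (auto simp: m_assoc)

lemma conj_inv_eq_iff:
  assumes "h \<in> carrier G" "z \<in> carrier G"
  shows "h \<otimes> inv z \<otimes> inv h = inv z \<longleftrightarrow> h \<otimes> z \<otimes> inv h = z"
proof -
  have "h \<otimes> inv z \<otimes> inv h = inv (h \<otimes> z \<otimes> inv h)"
    using assms by (simp add: inv_mult_group m_assoc)
  then show ?thesis using assms inv_inj by (auto simp: inj_on_def)
qed

lemma conj_pow_scale:
  fixes m n q :: int
  assumes "c \<in> carrier G" "g \<in> carrier G" "c \<otimes> g [^] m \<otimes> inv c = g [^] n"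
  shows "c \<otimes> g [^] (m * q) \<otimes> inv c = g [^] (n * q)"
  using assms conj_int_pow[of c "g [^] m" q] by (simp add: int_pow_pow)

lemma conj_pow_iterate:
  fixes m n :: int
  assumes c: "c \<in> carrier G" and g: "g \<in> carrier G" and e: "c \<otimes> g [^] m \<otimes> inv c = g [^] n"
  shows "c [^] (j::nat) \<otimes> g [^] (m ^ j) \<otimes> inv (c [^] j) = g [^] (n ^ j)"
proof (induction j)
  case 0
  then show ?case using g by simp
next
  case (Suc j)
  have "c [^] Suc j \<otimes> g [^] (m ^ Suc j) \<otimes> inv (c [^] Suc j)
      = c [^] j \<otimes> (c \<otimes> g [^] (m * m ^ j) \<otimes> inv c) \<otimes> inv (c [^] j)"
    using conj_mult[of "c [^] j" c] c g by (simp add: nat_pow_Suc)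
  also have "\<dots> = c [^] j \<otimes> g [^] (m ^ j * n) \<otimes> inv (c [^] j)"
    using conj_pow_scale[OF c g e, of "m ^ j"] by (simp add: mult.commute)
  also have "\<dots> = g [^] (n ^ j * n)" using conj_pow_scale[OF _ g Suc.IH, of n] c by simp
  finally show ?case by (simp add: mult.commute)
qed

lemma conj_solutions_rcoset:
  assumes a: "a \<in> carrier G" and y: "y \<in> carrier G" and e: "a \<otimes> y \<otimes> inv a = z"
  shows "{x \<in> carrier G. x \<otimes> y \<otimes> inv x = z} = {h \<in> carrier G. h \<otimes> z \<otimes> inv h = z} #> a"
proof (intro equalityI subsetI)
  fix x assume "x \<in> {x \<in> carrier G. x \<otimes> y \<otimes> inv x = z}"
  then have x: "x \<in> carrier G" "x \<otimes> y \<otimes> inv x = z" by auto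
  define h where "h = x \<otimes> inv a"
  have h: "h \<in> carrier G" and xh: "x = h \<otimes> a" unfolding h_def using x a by (auto simp: m_assoc)
  have "h \<otimes> z \<otimes> inv h = z" using conj_mult[OF h a y] x xh e by simp
  then show "x \<in> {h \<in> carrier G. h \<otimes> z \<otimes> inv h = z} #> a"
    unfolding r_coset_def using h xh by blast
next
  fix x assume "x \<in> {h \<in> carrier G. h \<otimes> z \<otimes> inv h = z} #> a"
  then obtain h where h: "h \<in> carrier G" "h \<otimes> z \<otimes> inv h = z" and xh: "x = h \<otimes> a"
    unfolding r_coset_def by blast
  then show "x \<in> {x \<in> carrier G. x \<otimes> y \<otimes> inv x = z}" using conj_mult[OF h(1) a y] a e by simp
qed

text \<open>Two of the powers \<open>h\<^sup>0, \<dots>, h\<^bsup>card F\<^esup>\<close> lie in the same coset \<open>\<langle>g\<rangle>f\<close>.\<close>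
lemma pigeonhole_power_in_cyclic:
  assumes g: "g \<in> carrier G" and h: "h \<in> carrier G" and F: "finite F" "F \<subseteq> carrier G"
    and cover: "\<And>i::int. \<exists>k::int. \<exists>f\<in>F. h [^] i = g [^] k \<otimes> f"
  shows "\<exists>m::int. 1 \<le> m \<and> m \<le> int (card F) \<and> (\<exists>n::int. h [^] m = g [^] n)"
proof -
  define f where "f i = (SOME f. f \<in> F \<and> (\<exists>k::int. h [^] int i = g [^] k \<otimes> f))" for i :: nat
  have f: "f i \<in> F \<and> (\<exists>k::int. h [^] int i = g [^] k \<otimes> f i)" for i
  proof -
    have "\<exists>f. f \<in> F \<and> (\<exists>k::int. h [^] int i = g [^] k \<otimes> f)" using cover[of "int i"] by blast
    then show ?thesis unfolding f_def by (rule someI_ex)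
  qed
  have "\<not> inj_on f {0..card F}"
  proof
    assume "inj_on f {0..card F}"
    then have "card {0..card F} \<le> card F" using card_inj_on_le[of f "{0..card F}" F] f F(1) by auto
    then show False by simp
  qed
  then obtain a b where ab: "a \<le> card F" "b \<le> card F" "a \<noteq> b" "f a = f b"
    unfolding inj_on_def by auto
  obtain i j where ij: "i < j" "j \<le> card F" "f i = f j"
  proof (cases "a < b")
    case True
    then show ?thesis using that ab by blast
  next
    case False
    then show ?thesis using that[of b a] ab by simp
  qed
  obtain ki :: int where ki: "h [^] int i = g [^] ki \<otimes> f i" using f by blast
  obtain kj :: int where kj: "h [^] int j = g [^] kj \<otimes> f i" using f[of j] ij(3) by auto
  have fi: "f i \<in> carrier G" using f F(2) by blast
  have "h [^] (int j - int i) = h [^] int j \<otimes> inv (h [^] int i)" using h by (rule int_pow_diff)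
  also have "\<dots> = g [^] kj \<otimes> inv (g [^] ki)"
    unfolding ki kj using g fi by (simp add: inv_mult_group m_assoc)
  also have "\<dots> = g [^] (kj - ki)" using g by (simp add: int_pow_diff)
  finally show ?thesis using ij by (intro exI[of _ "int j - int i"]) auto
qed

lemma rcosets_centraliser_card_le_two:
  assumes E: "E \<subseteq> carrier G" and y: "y \<in> carrier G"
    and conj: "\<And>a. a \<in> E \<Longrightarrow> a \<otimes> y \<otimes> inv a \<in> {y, inv y}"
  shows "finite (rcosets\<^bsub>G\<lparr>carrier := E\<rparr>\<^esub> {h \<in> carrier G. h \<otimes> y \<otimes> inv h = y})"
    and "card (rcosets\<^bsub>G\<lparr>carrier := E\<rparr>\<^esub> {h \<in> carrier G. h \<otimes> y \<otimes> inv h = y}) \<le> 2"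
proof -
  let ?C = "{h \<in> carrier G. h \<otimes> y \<otimes> inv h = y}"
  define S where "S z = {x \<in> carrier G. x \<otimes> y \<otimes> inv x = z}" for z
  have "?C #> a \<in> S ` {y, inv y}" if a: "a \<in> E" for a
  proof -
    have ac: "a \<in> carrier G" using E a by blast
    obtain z where z: "z \<in> {y, inv y}" "a \<otimes> y \<otimes> inv a = z" using conj[OF a] by blast
    have "{h \<in> carrier G. h \<otimes> z \<otimes> inv h = z} = ?C" using z(1) y conj_inv_eq_iff by auto
    then have "S z = ?C #> a" unfolding S_def using conj_solutions_rcoset[OF ac y z(2)] by simp
    then show ?thesis using z(1) by blast
  qed
  then have sub: "rcosets\<^bsub>G\<lparr>carrier := E\<rparr>\<^esub> ?C \<subseteq> S ` {y, inv y}"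
    unfolding RCOSETS_def r_coset_def by auto
  then show "finite (rcosets\<^bsub>G\<lparr>carrier := E\<rparr>\<^esub> ?C)" by (rule finite_subset) simp
  have "card (rcosets\<^bsub>G\<lparr>carrier := E\<rparr>\<^esub> ?C) \<le> card (S ` {y, inv y})"
    using sub by (rule card_mono[rotated]) simp
  also have "\<dots> \<le> card {y, inv y}" by (rule card_image_le) simp
  also have "\<dots> \<le> 2" by (simp add: card_insert_if)
  finally show "card (rcosets\<^bsub>G\<lparr>carrier := E\<rparr>\<^esub> ?C) \<le> 2" .
qed

end

section \<open>Constricting maps in a path system group\<close>

lemma infdist_less_imp_ex:
  assumes "A \<noteq> {}" "infdist x A < e"
  shows "\<exists>a\<in>A. dist x a < e"
proof -
  have "(INF a\<in>A. dist x a) < e" using assms(2) infdist_notempty[OF assms(1)] by simp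
  then show ?thesis
    using assms(1) by (subst (asm) cINF_less_iff) (auto intro: bdd_belowI[where m=0])
qed

lemma constricting_map_in: "constricting_map \<Gamma> \<delta> S \<pi> \<Longrightarrow> \<pi> x \<in> S"
  unfolding constricting_map_def by blast

lemma constricting_map_near: "constricting_map \<Gamma> \<delta> S \<pi> \<Longrightarrow> x \<in> S \<Longrightarrow> dist x (\<pi> x) \<le> \<delta>"
  unfolding constricting_map_def by blast

lemma constricting_map_path:
  assumes "constricting_map \<Gamma> \<delta> S \<pi>" and "(a, b, \<alpha>) \<in> \<Gamma>" and "\<delta> < dist (\<pi> (\<alpha> a)) (\<pi> (\<alpha> b))"
  shows "\<exists>t\<in>{a..b}. dist (\<alpha> t) (\<pi> (\<alpha> a)) \<le> \<delta>" and "\<exists>t\<in>{a..b}. dist (\<alpha> t) (\<pi> (\<alpha> b)) \<le> \<delta>"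
  using assms unfolding constricting_map_def by blast+

locale path_system =
  fixes \<mu> \<nu> :: real and G :: "('a, 'b) monoid_scheme" and \<phi> :: "'a \<Rightarrow> 'c::metric_space \<Rightarrow> 'c"
    and \<Gamma> :: "'c rpath set"
  assumes path_system_group: "path_system_group \<mu> \<nu> G \<phi> \<Gamma>"
begin

lemma group: "group G"
  using path_system_group unfolding path_system_group_def isometric_action_def by blast

sublocale G: group G by (rule group)

lemma dist_act: "h \<in> carrier G \<Longrightarrow> dist (\<phi> h x) (\<phi> h y) = dist x y"
  using path_system_group unfolding path_system_group_def isometric_action_def by blast

lemma act_one [simp]: "\<phi> \<one>\<^bsub>G\<^esub> x = x"
  using path_system_group unfolding path_system_group_def isometric_action_def by blast

lemma act_mult: "h \<in> carrier G \<Longrightarrow> k \<in> carrier G \<Longrightarrow> \<phi> (h \<otimes>\<^bsub>G\<^esub> k) x = \<phi> h (\<phi> k x)"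
  using path_system_group unfolding path_system_group_def isometric_action_def by blast

lemma act_inv_act [simp]: "h \<in> carrier G \<Longrightarrow> \<phi> (inv\<^bsub>G\<^esub> h) (\<phi> h x) = x"
  using act_mult[of "inv\<^bsub>G\<^esub> h" h x] by simp

lemma act_act_inv [simp]: "h \<in> carrier G \<Longrightarrow> \<phi> h (\<phi> (inv\<^bsub>G\<^esub> h) x) = x"
  using act_mult[of h "inv\<^bsub>G\<^esub> h" x] by simp

lemma finite_displacement: "finite {h \<in> carrier G. dist x (\<phi> h x) \<le> r}"
  using path_system_group unfolding path_system_group_def proper_action_def by blast

lemma path_translate: "(a, b, \<alpha>) \<in> \<Gamma> \<Longrightarrow> h \<in> carrier G \<Longrightarrow> (a, b, \<phi> h \<circ> \<alpha>) \<in> \<Gamma>"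
  using path_system_group unfolding path_system_group_def by blast

lemma subpath: "(a, b, \<alpha>) \<in> \<Gamma> \<Longrightarrow> a \<le> c \<Longrightarrow> c \<le> d \<Longrightarrow> d \<le> b \<Longrightarrow> (c, d, \<alpha>) \<in> \<Gamma>"
  using path_system_group unfolding path_system_group_def by blast

lemma obtain_path:
  obtains a b \<alpha> where "(a, b, \<alpha>) \<in> \<Gamma>" "\<alpha> a = x" "\<alpha> b = y"
  using path_system_group unfolding path_system_group_def by blast

lemma path_quasi_geodesic:
  assumes "(a, b, \<alpha>) \<in> \<Gamma>"
  shows "a \<le> b"
    and "t \<in> {a..b} \<Longrightarrow> t' \<in> {a..b} \<Longrightarrow> dist (\<alpha> t) (\<alpha> t') \<le> \<bar>t - t'\<bar>"
    and "t \<in> {a..b} \<Longrightarrow> t' \<in> {a..b} \<Longrightarrow> \<bar>t - t'\<bar> \<le> \<mu> * dist (\<alpha> t) (\<alpha> t') + \<nu>"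
proof -
  have "quasi_geodesic \<mu> \<nu> (a, b, \<alpha>)"
    using path_system_group assms unfolding path_system_group_def by blast
  then show "a \<le> b"
    and "t \<in> {a..b} \<Longrightarrow> t' \<in> {a..b} \<Longrightarrow> dist (\<alpha> t) (\<alpha> t') \<le> \<bar>t - t'\<bar>"
    and "t \<in> {a..b} \<Longrightarrow> t' \<in> {a..b} \<Longrightarrow> \<bar>t - t'\<bar> \<le> \<mu> * dist (\<alpha> t) (\<alpha> t') + \<nu>"
    unfolding quasi_geodesic_def is_path_def by auto
qed

definition length_bound :: "real \<Rightarrow> real" where
  "length_bound \<rho> = \<bar>\<mu>\<bar> * \<rho> + \<bar>\<nu>\<bar>"

lemma length_bound_mono: "\<rho> \<le> \<rho>' \<Longrightarrow> length_bound \<rho> \<le> length_bound \<rho>'"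
  unfolding length_bound_def by (simp add: mult_left_mono)

lemma length_bound_nonneg: "0 \<le> \<rho> \<Longrightarrow> 0 \<le> length_bound \<rho>"
  unfolding length_bound_def by simp

lemma path_length_le:
  assumes "(a, b, \<alpha>) \<in> \<Gamma>" "a \<le> s" "s \<le> s'" "s' \<le> b"
  shows "s' - s \<le> length_bound (dist (\<alpha> s) (\<alpha> s'))"
proof -
  have "\<bar>s - s'\<bar> \<le> \<mu> * dist (\<alpha> s) (\<alpha> s') + \<nu>"
    using path_quasi_geodesic(3)[OF assms(1), of s s'] assms by auto
  moreover have "\<mu> * dist (\<alpha> s) (\<alpha> s') \<le> \<bar>\<mu>\<bar> * dist (\<alpha> s) (\<alpha> s')"
    by (simp add: mult_right_mono)
  ultimately show ?thesis using assms unfolding length_bound_def by auto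
qed

definition projection_bound :: "real \<Rightarrow> real \<Rightarrow> real" where
  "projection_bound \<delta> \<rho> = \<rho> + 2 * \<delta> + length_bound \<rho>"

text \<open>A point \<open>\<rho>\<close>-close to \<open>S\<close> is close to its projection: otherwise a path to the
  nearby point of \<open>S\<close> passes near the projection, and that path is short.\<close>
lemma dist_projection_le:
  assumes cm: "constricting_map \<Gamma> \<delta> S \<pi>" and s: "s \<in> S" "dist z s \<le> \<rho>"
  shows "dist z (\<pi> z) \<le> projection_bound \<delta> \<rho>"
proof -
  have s_proj: "dist s (\<pi> s) \<le> \<delta>" using constricting_map_near[OF cm s(1)] .
  have "0 \<le> \<rho>" "0 \<le> \<delta>" using s(2) s_proj zero_le_dist order_trans by blast+
  show ?thesis
  proof (cases "dist (\<pi> z) (\<pi> s) \<le> \<delta>")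
    case True
    have "dist z (\<pi> z) \<le> dist z s + dist s (\<pi> s) + dist (\<pi> s) (\<pi> z)"
      using dist_triangle[of z "\<pi> z" s] dist_triangle[of s "\<pi> z" "\<pi> s"] by linarith
    then show ?thesis
      using True s_proj s(2) length_bound_nonneg[OF \<open>0 \<le> \<rho>\<close>]
      unfolding projection_bound_def by (simp add: dist_commute)
  next
    case False
    obtain a b \<alpha> where P: "(a, b, \<alpha>) \<in> \<Gamma>" "\<alpha> a = z" "\<alpha> b = s" by (rule obtain_path)
    then obtain t where t: "t \<in> {a..b}" "dist (\<alpha> t) (\<pi> z) \<le> \<delta>"
      using constricting_map_path(1)[OF cm P(1)] False by auto
    have ab: "a \<le> b" using path_quasi_geodesic(1)[OF P(1)] .
    have "dist z (\<alpha> t) \<le> b - a" using path_quasi_geodesic(2)[OF P(1), of a t] t ab P(2) by auto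
    also have "\<dots> \<le> length_bound \<rho>"
      using path_length_le[OF P(1) order_refl ab order_refl] P length_bound_mono s(2) by fastforce
    finally show ?thesis
      using t dist_triangle[of z "\<pi> z" "\<alpha> t"] \<open>0 \<le> \<rho>\<close> \<open>0 \<le> \<delta>\<close> unfolding projection_bound_def by linarith
  qed
qed

lemma projections_close_if_path_far:
  assumes cm: "constricting_map \<Gamma> \<delta> S \<pi>" and P: "(a, b, \<alpha>) \<in> \<Gamma>"
    and far: "\<forall>t\<in>{a..b}. \<forall>y\<in>S. \<delta> < dist (\<alpha> t) y"
  shows "dist (\<pi> (\<alpha> a)) (\<pi> (\<alpha> b)) \<le> \<delta>"
proof (rule ccontr)
  assume "\<not> ?thesis"
  then obtain t where t: "t \<in> {a..b}" "dist (\<alpha> t) (\<pi> (\<alpha> a)) \<le> \<delta>"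
    using constricting_map_path(1)[OF cm P] by auto
  have "\<delta> < dist (\<alpha> t) (\<pi> (\<alpha> a))" using far t(1) constricting_map_in[OF cm] by blast
  then show False using t(2) by linarith
qed

lemma far_path_endpoints_close:
  assumes cm: "constricting_map \<Gamma> \<delta> S \<pi>" and P: "(a, b, \<alpha>) \<in> \<Gamma>"
    and far: "\<forall>t\<in>{a..b}. \<forall>y\<in>S. \<delta> < dist (\<alpha> t) y"
    and ends: "y\<^sub>a \<in> S" "dist (\<alpha> a) y\<^sub>a \<le> \<rho>" "y\<^sub>b \<in> S" "dist (\<alpha> b) y\<^sub>b \<le> \<rho>"
  shows "dist (\<alpha> a) (\<alpha> b) \<le> 2 * projection_bound \<delta> \<rho> + \<delta>"
proof -
  have "dist (\<alpha> a) (\<alpha> b)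
      \<le> dist (\<alpha> a) (\<pi> (\<alpha> a)) + dist (\<pi> (\<alpha> a)) (\<pi> (\<alpha> b)) + dist (\<alpha> b) (\<pi> (\<alpha> b))"
    using dist_triangle[of "\<alpha> a" "\<alpha> b" "\<pi> (\<alpha> a)"]
      dist_triangle[of "\<pi> (\<alpha> a)" "\<alpha> b" "\<pi> (\<alpha> b)"] by (simp add: dist_commute)
  also have "\<dots> \<le> 2 * projection_bound \<delta> \<rho> + \<delta>"
    using dist_projection_le[OF cm ends(1,2)] dist_projection_le[OF cm ends(3,4)]
      projections_close_if_path_far[OF cm P far] by simp
  finally show ?thesis .
qed

definition morse_bound :: "real \<Rightarrow> real" where
  "morse_bound \<delta> = length_bound (2 * projection_bound \<delta> (\<delta> + 4) + \<delta>) + \<delta> + 4"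

text \<open>Constricted sets are Morse: a maximal stretch of the path far from \<open>S\<close> has nearby
  endpoints by \<open>far_path_endpoints_close\<close>, so it is short.\<close>
lemma path_near_constricted_set:
  assumes cm: "constricting_map \<Gamma> \<delta> S \<pi>" and P: "(a, b, \<alpha>) \<in> \<Gamma>"
    and ends: "s\<^sub>a \<in> S" "dist (\<alpha> a) s\<^sub>a \<le> \<delta>" "s\<^sub>b \<in> S" "dist (\<alpha> b) s\<^sub>b \<le> \<delta>"
    and t: "t \<in> {a..b}"
  shows "\<exists>y\<in>S. dist (\<alpha> t) y \<le> morse_bound \<delta>"
proof -
  define f where "f s = infdist (\<alpha> s) S" for s
  have "0 \<le> \<delta>" using ends(2) zero_le_dist order_trans by blast
  have "\<delta> + 4 \<le> morse_bound \<delta>"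
    unfolding morse_bound_def projection_bound_def using \<open>0 \<le> \<delta>\<close> by (simp add: length_bound_nonneg)
  have near: "\<exists>y\<in>S. dist (\<alpha> u) y \<le> \<delta> + 4"
    if su: "s \<in> {a..b}" "u \<in> {a..b}" "\<bar>u - s\<bar> \<le> 2" "f s \<le> \<delta> + 1" for s u
  proof -
    obtain y where "y \<in> S" "dist (\<alpha> s) y < \<delta> + 2"
      using infdist_less_imp_ex[of S "\<alpha> s" "\<delta> + 2"] su(4) ends(1) unfolding f_def by fastforce
    moreover have "dist (\<alpha> u) (\<alpha> s) \<le> 2" using path_quasi_geodesic(2)[OF P su(2,1)] su(3) by linarith
    ultimately show ?thesis using dist_triangle[of "\<alpha> u" y "\<alpha> s"] by (intro bexI[of _ y]) auto
  qed
  show ?thesis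
  proof (cases "f t \<le> \<delta> + 1")
    case True
    then show ?thesis using near[OF t t] \<open>\<delta> + 4 \<le> morse_bound \<delta>\<close> by force
  next
    case False
    have "a \<le> t" "t \<le> b" "f a \<le> \<delta> + 1" "f b \<le> \<delta> + 1" "\<delta> + 1 < f t"
      using infdist_le2[OF ends(1,2)] infdist_le2[OF ends(3,4)] False t unfolding f_def by auto
    then obtain s1 u1 u2 s2 where u: "a \<le> s1" "s1 \<le> u1" "u1 \<le> t" "t \<le> u2" "u2 \<le> s2" "s2 \<le> b"
      "u1 - s1 \<le> 2" "s2 - u2 \<le> 2" "f s1 \<le> \<delta> + 1" "f s2 \<le> \<delta> + 1" "\<forall>r\<in>{u1..u2}. \<delta> + 1 < f r"
      by (rule excursion_interval)
    have far: "\<forall>r\<in>{u1..u2}. \<forall>y\<in>S. \<delta> < dist (\<alpha> r) y"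
    proof (intro ballI)
      fix r y assume "r \<in> {u1..u2}" "y \<in> S"
      then show "\<delta> < dist (\<alpha> r) y" using u(11) infdist_le[of y S "\<alpha> r"] unfolding f_def by fastforce
    qed
    obtain y1 where y1: "y1 \<in> S" "dist (\<alpha> u1) y1 \<le> \<delta> + 4" using near[of s1 u1] u t by auto
    obtain y2 where y2: "y2 \<in> S" "dist (\<alpha> u2) y2 \<le> \<delta> + 4" using near[of s2 u2] u t by auto
    have "dist (\<alpha> u1) (\<alpha> u2) \<le> 2 * projection_bound \<delta> (\<delta> + 4) + \<delta>"
      using far_path_endpoints_close[OF cm subpath[OF P] far y1 y2] u by linarith
    then have "u2 - u1 \<le> length_bound (2 * projection_bound \<delta> (\<delta> + 4) + \<delta>)"
      using path_length_le[OF P, of u1 u2] length_bound_mono u by fastforce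
    moreover have "dist (\<alpha> t) (\<alpha> u1) \<le> u2 - u1"
      using path_quasi_geodesic(2)[OF P, of t u1] t u by auto
    ultimately have "dist (\<alpha> t) y1 \<le> morse_bound \<delta>"
      using y1(2) dist_triangle[of "\<alpha> t" y1 "\<alpha> u1"] unfolding morse_bound_def by linarith
    then show ?thesis using y1(1) by blast
  qed
qed

lemma constricting_map_translate:
  assumes u: "u \<in> carrier G" and cm: "constricting_map \<Gamma> \<delta> S \<pi>"
  shows "constricting_map \<Gamma> \<delta> (\<phi> u ` S) (\<lambda>x. \<phi> u (\<pi> (\<phi> (inv\<^bsub>G\<^esub> u) x)))"
  unfolding constricting_map_def
proof (intro conjI allI ballI impI)
  fix x
  show "\<phi> u (\<pi> (\<phi> (inv\<^bsub>G\<^esub> u) x)) \<in> \<phi> u ` S" using constricting_map_in[OF cm] by blast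
next
  fix x assume "x \<in> \<phi> u ` S"
  then obtain s where "s \<in> S" "x = \<phi> u s" by blast
  then show "dist x (\<phi> u (\<pi> (\<phi> (inv\<^bsub>G\<^esub> u) x))) \<le> \<delta>"
    using u dist_act constricting_map_near[OF cm] by simp
next
  fix x y a b \<alpha>
  assume H: "(a, b, \<alpha>) \<in> \<Gamma> \<and> \<alpha> a = x \<and> \<alpha> b = y \<and>
    \<delta> < dist (\<phi> u (\<pi> (\<phi> (inv\<^bsub>G\<^esub> u) x))) (\<phi> u (\<pi> (\<phi> (inv\<^bsub>G\<^esub> u) y)))"
  define \<beta> where "\<beta> = \<phi> (inv\<^bsub>G\<^esub> u) \<circ> \<alpha>"
  have ui: "inv\<^bsub>G\<^esub> u \<in> carrier G" using u by simp
  have P: "(a, b, \<beta>) \<in> \<Gamma>" using path_translate[OF _ ui] H unfolding \<beta>_def by blast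
  have "\<delta> < dist (\<pi> (\<beta> a)) (\<pi> (\<beta> b))" using H dist_act[OF u] unfolding \<beta>_def by simp
  note close = constricting_map_path[OF cm P this]
  have "dist (\<alpha> t) (\<phi> u z) = dist (\<beta> t) z" for t z
    using dist_act[OF u, of "\<beta> t" z] u unfolding \<beta>_def by simp
  then show "\<exists>t\<in>{a..b}. dist (\<alpha> t) (\<phi> u (\<pi> (\<phi> (inv\<^bsub>G\<^esub> u) x))) \<le> \<delta>"
    and "\<exists>t\<in>{a..b}. dist (\<alpha> t) (\<phi> u (\<pi> (\<phi> (inv\<^bsub>G\<^esub> u) y))) \<le> \<delta>"
    using close H unfolding \<beta>_def by auto
qed

end

section \<open>The elementary closure of a constricting element\<close>

locale constricting_pair = path_system +
  fixes \<delta> :: real and g :: 'a and A :: "'c::metric_space set"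
  assumes constricting_element: "constricting_element G \<phi> \<Gamma> \<delta> g A"
begin

abbreviation gpow :: "int \<Rightarrow> 'a" where "gpow k \<equiv> g [^]\<^bsub>G\<^esub> k"

abbreviation E :: "'a set" where "E \<equiv> elementary_closure G \<phi> A"

lemma g_carrier: "g \<in> carrier G"
  using constricting_element unfolding constricting_element_def by blast

lemma gpow_carrier [simp]: "gpow k \<in> carrier G"
  using g_carrier by simp

lemma gpow_eq_iff: "gpow i = gpow j \<longleftrightarrow> i = j"
proof -
  have "G.ord g = 0"
    using constricting_element G.ord_eq_0[OF g_carrier] unfolding constricting_element_def by blast
  then show ?thesis using G.int_pow_eq[OF g_carrier] by auto
qed

lemma act_gpow_add: "\<phi> (gpow (i + j)) x = \<phi> (gpow i) (\<phi> (gpow j) x)"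
  using G.int_pow_mult[OF g_carrier] act_mult by simp

lemma gpow_image_A: "\<phi> (gpow k) ` A = A"
  using constricting_element unfolding constricting_element_def by blast

lemma A_cobounded: "x \<in> A \<Longrightarrow> y \<in> A \<Longrightarrow> \<exists>k. dist (\<phi> (gpow k) x) y \<le> \<delta>"
  using constricting_element unfolding constricting_element_def by blast

definition proj :: "'c \<Rightarrow> 'c" where
  "proj = (SOME \<pi>. constricting_map \<Gamma> \<delta> A \<pi>)"

lemma constricting_map_proj: "constricting_map \<Gamma> \<delta> A proj"
  using constricting_element someI_ex unfolding constricting_element_def proj_def by metis

text \<open>An arbitrary point of \<open>A\<close>, playing the role of \<open>x\<^sub>0\<close>.\<close>
definition base_point :: 'c where
  "base_point = proj undefined"

lemma base_point_in_A: "base_point \<in> A"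
  unfolding base_point_def by (rule constricting_map_in[OF constricting_map_proj])

lemma delta_nonneg: "0 \<le> \<delta>"
  using constricting_map_near[OF constricting_map_proj base_point_in_A] zero_le_dist order_trans by blast

lemma dist_orbit: "dist (\<phi> (gpow i) x) (\<phi> (gpow j) x) = dist x (\<phi> (gpow (j - i)) x)"
proof -
  have "dist (\<phi> (gpow i) x) (\<phi> (gpow j) x) = dist (\<phi> (gpow i) x) (\<phi> (gpow i) (\<phi> (gpow (j - i)) x))"
    using act_gpow_add[of i "j - i"] by simp
  then show ?thesis using dist_act by simp
qed

lemma orbit_coarsely_injective:
  "\<exists>T::nat. \<forall>i j. dist (\<phi> (gpow i) x) (\<phi> (gpow j) x) \<le> R \<longrightarrow> \<bar>i - j\<bar> \<le> int T"
proof -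
  let ?K = "{k. dist x (\<phi> (gpow k) x) \<le> R}"
  have "gpow ` ?K \<subseteq> {h \<in> carrier G. dist x (\<phi> h x) \<le> R}" by auto
  then have "finite (gpow ` ?K)" using finite_displacement finite_subset by blast
  moreover have "inj_on gpow ?K" using gpow_eq_iff by (auto simp: inj_on_def)
  ultimately have "finite (abs ` ?K)" using finite_imageD by blast
  then have bound: "\<bar>k\<bar> \<le> int (nat (Max (insert 0 (abs ` ?K))))" if "k \<in> ?K" for k
    using that Max_ge[of "insert 0 (abs ` ?K)" "\<bar>k\<bar>"] by simp
  show ?thesis
  proof (intro exI allI impI)
    fix i j assume "dist (\<phi> (gpow i) x) (\<phi> (gpow j) x) \<le> R"
    then have "\<bar>j - i\<bar> \<le> int (nat (Max (insert 0 (abs ` ?K))))" using bound dist_orbit by simp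
    then show "\<bar>i - j\<bar> \<le> int (nat (Max (insert 0 (abs ` ?K))))" by (simp add: abs_minus_commute)
  qed
qed

lemma orbit_bounded_steps: "\<exists>D. \<forall>i j. \<bar>i - j\<bar> \<le> T \<longrightarrow> dist (\<phi> (gpow i) x) (\<phi> (gpow j) x) \<le> D"
proof -
  define D where "D = (\<Sum>k\<in>{-T..T}. dist x (\<phi> (gpow k) x))"
  have "dist x (\<phi> (gpow k) x) \<le> D" if "\<bar>k\<bar> \<le> T" for k
    unfolding D_def by (rule member_le_sum) (use that in auto)
  then have "dist (\<phi> (gpow i) x) (\<phi> (gpow j) x) \<le> D" if "\<bar>i - j\<bar> \<le> T" for i j
    using that dist_orbit[of i x j] by (simp add: abs_minus_commute)
  then show ?thesis by blast
qed

lemma elementary_closure_subgroup: "subgroup E G"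
proof (rule G.subgroupI)
  show "E \<subseteq> carrier G" unfolding elementary_closure_def by blast
  have "\<one>\<^bsub>G\<^esub> \<in> E"
    unfolding elementary_closure_def using finite_hausdorff_refl by simp
  then show "E \<noteq> {}" by blast
next
  fix u assume "u \<in> E"
  then have u: "u \<in> carrier G" and fh: "finite_hausdorff A (\<phi> u ` A)"
    unfolding elementary_closure_def using finite_hausdorff_commute by auto
  have ui: "inv\<^bsub>G\<^esub> u \<in> carrier G" using u by simp
  have "\<phi> (inv\<^bsub>G\<^esub> u) ` \<phi> u ` A = A" using u by (simp add: image_image)
  then have "finite_hausdorff (\<phi> (inv\<^bsub>G\<^esub> u) ` A) A"
    using finite_hausdorff_isometric_image[OF dist_act[OF ui] fh] by simp
  then show "inv\<^bsub>G\<^esub> u \<in> E" unfolding elementary_closure_def using ui by blast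
next
  fix u v assume "u \<in> E" "v \<in> E"
  then have u: "u \<in> carrier G" "finite_hausdorff (\<phi> u ` A) A"
    and v: "v \<in> carrier G" "finite_hausdorff (\<phi> v ` A) A"
    unfolding elementary_closure_def by auto
  have "\<phi> (u \<otimes>\<^bsub>G\<^esub> v) ` A = \<phi> u ` \<phi> v ` A" using u v act_mult by (simp add: image_image)
  then have "finite_hausdorff (\<phi> (u \<otimes>\<^bsub>G\<^esub> v) ` A) A"
    using finite_hausdorff_trans[OF finite_hausdorff_isometric_image[OF dist_act[OF u(1)] v(2)] u(2)]
    by simp
  then show "u \<otimes>\<^bsub>G\<^esub> v \<in> E"
    unfolding elementary_closure_def using u v by simp
qed

lemma elementary_closure_carrier: "u \<in> E \<Longrightarrow> u \<in> carrier G"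
  unfolding elementary_closure_def by blast

lemma inv_in_elementary_closure: "u \<in> E \<Longrightarrow> inv\<^bsub>G\<^esub> u \<in> E"
  by (rule subgroup.m_inv_closed[OF elementary_closure_subgroup])

lemma gpow_in_elementary_closure: "gpow k \<in> E"
  unfolding elementary_closure_def using gpow_image_A finite_hausdorff_refl by simp

definition shadow_bound :: real where
  "shadow_bound = projection_bound \<delta> (morse_bound \<delta>) + \<delta>"

lemma path_near_translated_orbit:
  assumes u: "u \<in> carrier G" and P: "(a, b, \<alpha>) \<in> \<Gamma>" and ends: "\<alpha> a \<in> \<phi> u ` A" "\<alpha> b \<in> \<phi> u ` A"
  obtains k :: "real \<Rightarrow> int"
  where "\<And>s. s \<in> {a..b} \<Longrightarrow> dist (\<alpha> s) (\<phi> u (\<phi> (gpow (k s)) base_point)) \<le> shadow_bound"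
proof -
  define \<pi> where "\<pi> x = \<phi> u (proj (\<phi> (inv\<^bsub>G\<^esub> u) x))" for x
  have cm: "constricting_map \<Gamma> \<delta> (\<phi> u ` A) \<pi>"
    unfolding \<pi>_def by (rule constricting_map_translate[OF u constricting_map_proj])
  have "\<exists>k. dist (\<alpha> s) (\<phi> u (\<phi> (gpow k) base_point)) \<le> shadow_bound" if s: "s \<in> {a..b}" for s
  proof -
    have "dist (\<alpha> a) (\<alpha> a) \<le> \<delta>" "dist (\<alpha> b) (\<alpha> b) \<le> \<delta>" using delta_nonneg by simp_all
    then obtain y where y: "y \<in> \<phi> u ` A" "dist (\<alpha> s) y \<le> morse_bound \<delta>"
      using path_near_constricted_set[OF cm P ends(1) _ ends(2) _ s] by blast
    have proj_near: "dist (\<alpha> s) (\<pi> (\<alpha> s)) \<le> projection_bound \<delta> (morse_bound \<delta>)"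
      using dist_projection_le[OF cm y] .
    obtain a' where a': "a' \<in> A" "\<pi> (\<alpha> s) = \<phi> u a'" using constricting_map_in[OF cm] by blast
    obtain k where "dist (\<phi> (gpow k) base_point) a' \<le> \<delta>" using A_cobounded[OF base_point_in_A a'(1)] by blast
    then have "dist (\<pi> (\<alpha> s)) (\<phi> u (\<phi> (gpow k) base_point)) \<le> \<delta>"
      using a'(2) dist_act[OF u] by (simp add: dist_commute)
    then show ?thesis
      using proj_near dist_triangle[of "\<alpha> s" "\<phi> u (\<phi> (gpow k) base_point)" "\<pi> (\<alpha> s)"]
      unfolding shadow_bound_def by (intro exI[of _ k]) linarith
  qed
  then have "\<exists>k. \<forall>s\<in>{a..b}. dist (\<alpha> s) (\<phi> u (\<phi> (gpow (k s)) base_point)) \<le> shadow_bound"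
    by (intro bchoice ballI)
  then show ?thesis using that by blast
qed

text \<open>Along a path that starts and ends near \<open>A\<close> and shadows the translated orbit
  \<open>u g\<^sup>k x\<^sub>0\<close>, the shadowing index moves in bounded steps and changes sign, so it passes
  near \<open>0\<close>; there the path is near both \<open>u x\<^sub>0\<close> and \<open>A\<close>.\<close>
lemma orbit_crossing_near_A:
  obtains C where "\<And>u a b \<alpha> k. u \<in> carrier G \<Longrightarrow> (a, b, \<alpha>) \<in> \<Gamma> \<Longrightarrow>
      (\<And>s. s \<in> {a..b} \<Longrightarrow> dist (\<alpha> s) (\<phi> u (\<phi> (gpow (k s)) base_point)) \<le> H) \<Longrightarrow>
      \<exists>y\<in>A. dist (\<alpha> a) y \<le> \<delta> \<Longrightarrow> \<exists>y\<in>A. dist (\<alpha> b) y \<le> \<delta> \<Longrightarrow> k a * k b \<le> 0 \<Longrightarrow>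
      \<exists>y\<in>A. dist (\<phi> u base_point) y \<le> C"
proof -
  let ?o = "\<lambda>k. \<phi> (gpow k) base_point"
  obtain T :: nat where T: "\<And>i j. dist (?o i) (?o j) \<le> 2 * H + 1 \<Longrightarrow> \<bar>i - j\<bar> \<le> int T"
    using orbit_coarsely_injective by blast
  obtain D where D: "\<And>i j. \<bar>i - j\<bar> \<le> int T \<Longrightarrow> dist (?o i) (?o j) \<le> D"
    using orbit_bounded_steps by blast
  have "\<exists>y\<in>A. dist (\<phi> u base_point) y \<le> D + H + morse_bound \<delta>"
    if u: "u \<in> carrier G" and P: "(a, b, \<alpha>) \<in> \<Gamma>"
      and near: "\<And>s. s \<in> {a..b} \<Longrightarrow> dist (\<alpha> s) (\<phi> u (?o (k s))) \<le> H"
      and ends: "\<exists>y\<in>A. dist (\<alpha> a) y \<le> \<delta>" "\<exists>y\<in>A. dist (\<alpha> b) y \<le> \<delta>" and sign: "k a * k b \<le> 0"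
    for u a b \<alpha> k
  proof -
    have step: "\<bar>k s - k s'\<bar> \<le> int T" if ss': "s \<in> {a..b}" "s' \<in> {a..b}" "\<bar>s - s'\<bar> \<le> 1" for s s'
    proof -
      have "dist (\<alpha> s) (\<alpha> s') \<le> 1" using path_quasi_geodesic(2)[OF P ss'(1,2)] ss'(3) by linarith
      then have "dist (\<phi> u (?o (k s))) (\<phi> u (?o (k s'))) \<le> 2 * H + 1"
        using near[OF ss'(1)] near[OF ss'(2)]
          dist_triangle[of "\<phi> u (?o (k s))" "\<phi> u (?o (k s'))" "\<alpha> s"]
          dist_triangle[of "\<alpha> s" "\<phi> u (?o (k s'))" "\<alpha> s'"] by (simp add: dist_commute)
      then show ?thesis using T dist_act[OF u] by simp
    qed
    obtain s where s: "s \<in> {a..b}" "\<bar>k s\<bar> \<le> int T"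
      using int_valued_crossing[OF path_quasi_geodesic(1)[OF P] sign _ step] by auto
    have "dist (\<phi> u base_point) (\<phi> u (?o (k s))) \<le> D"
      using D[of 0 "k s"] s(2) dist_act[OF u] by simp
    moreover obtain y where y: "y \<in> A" "dist (\<alpha> s) y \<le> morse_bound \<delta>"
      using ends path_near_constricted_set[OF constricting_map_proj P _ _ _ _ s(1)] by blast
    ultimately have "dist (\<phi> u base_point) y \<le> D + H + morse_bound \<delta>"
      using near[OF s(1)] dist_triangle[of "\<phi> u base_point" y "\<phi> u (?o (k s))"]
        dist_triangle[of "\<phi> u (?o (k s))" y "\<alpha> s"] by (simp add: dist_commute)
    then show ?thesis using y(1) by blast
  qed
  then show ?thesis using that by blast
qed

text \<open>For large \<open>K\<close> the points \<open>u g\<^sup>\<plusminus>\<^sup>K x\<^sub>0\<close> of \<open>uA\<close> have far-apart projections to \<open>A\<close>, so a path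
  joining them passes near \<open>A\<close> twice, at points shadowed by orbit indices of opposite signs.\<close>
lemma translate_path_visits_A:
  assumes u: "u \<in> carrier G" and fh: "finite_hausdorff (\<phi> u ` A) A"
  obtains a b \<alpha> k tp tq where "(a, b, \<alpha>) \<in> \<Gamma>"
    and "\<And>s. s \<in> {a..b} \<Longrightarrow> dist (\<alpha> s) (\<phi> u (\<phi> (gpow (k s)) base_point)) \<le> shadow_bound"
    and "tp \<in> {a..b}" "\<exists>y\<in>A. dist (\<alpha> tp) y \<le> \<delta>" "k tp < 0"
    and "tq \<in> {a..b}" "\<exists>y\<in>A. dist (\<alpha> tq) y \<le> \<delta>" "0 < k tq"
proof -
  let ?b = "\<lambda>k. \<phi> u (\<phi> (gpow k) base_point)"
  have b_in: "?b k \<in> \<phi> u ` A" for k using gpow_image_A base_point_in_A by blast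
  obtain r where "\<forall>y\<in>\<phi> u ` A. \<exists>a\<in>A. dist a y \<le> r" using fh unfolding finite_hausdorff_def by blast
  then have b_proj: "dist (?b k) (proj (?b k)) \<le> projection_bound \<delta> r" for k
    using b_in dist_projection_le[OF constricting_map_proj] by (metis dist_commute)
  define R where "R = max (2 * projection_bound \<delta> r + \<delta>) (shadow_bound + \<delta> + projection_bound \<delta> r)"
  obtain T :: nat where T: "\<And>i j. dist (?b i) (?b j) \<le> R \<Longrightarrow> \<bar>i - j\<bar> \<le> int T"
    using orbit_coarsely_injective[of base_point R] dist_act[OF u] by auto
  define K where "K = int T + 1"
  have "\<delta> < dist (proj (?b (- K))) (proj (?b K))"
  proof (rule ccontr)
    assume "\<not> ?thesis"
    then have "dist (?b (- K)) (?b K) \<le> 2 * projection_bound \<delta> r + \<delta>"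
      using b_proj[of "- K"] b_proj[of K]
        dist_triangle[of "?b (- K)" "?b K" "proj (?b (- K))"]
        dist_triangle[of "proj (?b (- K))" "?b K" "proj (?b K)"] by (simp add: dist_commute)
    then have "dist (?b (- K)) (?b K) \<le> R" unfolding R_def by simp
    then show False using T[of "- K" K] unfolding K_def by simp
  qed
  obtain a b \<alpha> where P: "(a, b, \<alpha>) \<in> \<Gamma>" "\<alpha> a = ?b (- K)" "\<alpha> b = ?b K" by (rule obtain_path)
  obtain k where k: "\<And>s. s \<in> {a..b} \<Longrightarrow> dist (\<alpha> s) (?b (k s)) \<le> shadow_bound"
    using path_near_translated_orbit[OF u P(1)] P(2,3) b_in by metis
  obtain tp tq where t: "tp \<in> {a..b}" "dist (\<alpha> tp) (proj (?b (- K))) \<le> \<delta>"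
    "tq \<in> {a..b}" "dist (\<alpha> tq) (proj (?b K)) \<le> \<delta>"
    using constricting_map_path[OF constricting_map_proj P(1)] P(2,3) \<open>\<delta> < _\<close> by auto
  have index: "\<bar>k t - j\<bar> \<le> int T" if "t \<in> {a..b}" "dist (\<alpha> t) (proj (?b j)) \<le> \<delta>" for t j
  proof -
    have "dist (?b (k t)) (?b j) \<le> shadow_bound + \<delta> + projection_bound \<delta> r"
      using k[OF that(1)] that(2) b_proj[of j]
        dist_triangle[of "?b (k t)" "?b j" "\<alpha> t"] dist_triangle[of "\<alpha> t" "?b j" "proj (?b j)"]
      by (simp add: dist_commute)
    then show ?thesis using T unfolding R_def by fastforce
  qed
  have "k tp < 0" "0 < k tq" using index[OF t(1,2)] index[OF t(3,4)] unfolding K_def by auto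
  moreover have "\<exists>y\<in>A. dist (\<alpha> tp) y \<le> \<delta>" "\<exists>y\<in>A. dist (\<alpha> tq) y \<le> \<delta>"
    using t(2,4) constricting_map_in[OF constricting_map_proj] by blast+
  ultimately show ?thesis using that[OF P(1) k t(1) _ _ t(3)] by blast
qed

lemma translate_base_point_near_A:
  "\<exists>C. \<forall>u\<in>carrier G. finite_hausdorff (\<phi> u ` A) A \<longrightarrow> (\<exists>y\<in>A. dist (\<phi> u base_point) y \<le> C)"
proof -
  obtain C where C: "\<And>u a b \<alpha> k. u \<in> carrier G \<Longrightarrow> (a, b, \<alpha>) \<in> \<Gamma> \<Longrightarrow>
      (\<And>s. s \<in> {a..b} \<Longrightarrow> dist (\<alpha> s) (\<phi> u (\<phi> (gpow (k s)) base_point)) \<le> shadow_bound) \<Longrightarrow>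
      \<exists>y\<in>A. dist (\<alpha> a) y \<le> \<delta> \<Longrightarrow> \<exists>y\<in>A. dist (\<alpha> b) y \<le> \<delta> \<Longrightarrow> k a * k b \<le> 0 \<Longrightarrow>
      \<exists>y\<in>A. dist (\<phi> u base_point) y \<le> C"
    using orbit_crossing_near_A[where H = shadow_bound] by blast
  have "\<exists>y\<in>A. dist (\<phi> u base_point) y \<le> C" if u: "u \<in> carrier G" and fh: "finite_hausdorff (\<phi> u ` A) A" for u
  proof -
    obtain a b \<alpha> k tp tq where P: "(a, b, \<alpha>) \<in> \<Gamma>"
      and k: "\<And>s. s \<in> {a..b} \<Longrightarrow> dist (\<alpha> s) (\<phi> u (\<phi> (gpow (k s)) base_point)) \<le> shadow_bound"
      and tp: "tp \<in> {a..b}" "\<exists>y\<in>A. dist (\<alpha> tp) y \<le> \<delta>" "k tp < 0"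
      and tq: "tq \<in> {a..b}" "\<exists>y\<in>A. dist (\<alpha> tq) y \<le> \<delta>" "0 < k tq"
      using translate_path_visits_A[OF u fh] by blast
    define lo where "lo = min tp tq"
    define hi where "hi = max tp tq"
    have lohi: "a \<le> lo" "lo \<le> hi" "hi \<le> b" using tp tq unfolding lo_def hi_def by auto
    have near: "\<And>s. s \<in> {lo..hi} \<Longrightarrow> dist (\<alpha> s) (\<phi> u (\<phi> (gpow (k s)) base_point)) \<le> shadow_bound"
      using k lohi by auto
    have ends: "\<exists>y\<in>A. dist (\<alpha> lo) y \<le> \<delta>" "\<exists>y\<in>A. dist (\<alpha> hi) y \<le> \<delta>"
      using tp(2) tq(2) unfolding lo_def hi_def by (cases "tp \<le> tq"; simp add: min_def max_def)+
    have sign: "k lo * k hi \<le> 0"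
      using tp(3) tq(3) unfolding lo_def hi_def by (cases "tp \<le> tq") (auto simp: mult_le_0_iff)
    show ?thesis by (rule C[OF u subpath[OF P lohi] near ends sign])
  qed
  then show ?thesis by blast
qed

lemma elementary_closure_finite_over_cyclic:
  obtains F where "finite F" "F \<subseteq> carrier G" "\<And>e. e \<in> E \<Longrightarrow> \<exists>k. \<exists>f\<in>F. e = gpow k \<otimes>\<^bsub>G\<^esub> f"
proof -
  obtain C where C: "\<And>u. u \<in> carrier G \<Longrightarrow> finite_hausdorff (\<phi> u ` A) A \<Longrightarrow>
      \<exists>y\<in>A. dist (\<phi> u base_point) y \<le> C"
    using translate_base_point_near_A by blast
  define F where "F = {h \<in> carrier G. dist base_point (\<phi> h base_point) \<le> C + \<delta>}"
  have "\<exists>k. \<exists>f\<in>F. e = gpow k \<otimes>\<^bsub>G\<^esub> f" if e: "e \<in> E" for e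
  proof -
    have ec: "e \<in> carrier G" and "finite_hausdorff (\<phi> e ` A) A"
      using e unfolding elementary_closure_def by auto
    then obtain y where y: "y \<in> A" "dist (\<phi> e base_point) y \<le> C" using C by blast
    obtain k where k: "dist (\<phi> (gpow k) base_point) y \<le> \<delta>" using A_cobounded[OF base_point_in_A y(1)] by blast
    define f where "f = gpow (- k) \<otimes>\<^bsub>G\<^esub> e"
    have fc: "f \<in> carrier G" unfolding f_def using ec by simp
    have "gpow k \<otimes>\<^bsub>G\<^esub> gpow (- k) = \<one>\<^bsub>G\<^esub>" using G.int_pow_mult[OF g_carrier, of k "- k"] by simp
    then have ef: "e = gpow k \<otimes>\<^bsub>G\<^esub> f" unfolding f_def using ec by (simp add: G.m_assoc[symmetric])
    have "dist base_point (\<phi> f base_point) = dist (\<phi> (gpow k) base_point) (\<phi> e base_point)"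
      using dist_act[of "gpow k"] act_mult[OF gpow_carrier fc] ef by simp
    also have "\<dots> \<le> C + \<delta>"
      using k y(2) dist_triangle[of "\<phi> (gpow k) base_point" "\<phi> e base_point" y]
        dist_commute[of y "\<phi> e base_point"] by linarith
    finally have "f \<in> F" unfolding F_def using fc by simp
    then show ?thesis using ef by blast
  qed
  moreover have "finite F" unfolding F_def using finite_displacement .
  ultimately show ?thesis using that unfolding F_def by blast
qed

lemma elementary_closure_commensurates:
  obtains N :: nat where
    "\<And>u. u \<in> E \<Longrightarrow> \<exists>m. 1 \<le> m \<and> m \<le> int N \<and> (\<exists>n. u \<otimes>\<^bsub>G\<^esub> gpow m \<otimes>\<^bsub>G\<^esub> inv\<^bsub>G\<^esub> u = gpow n)"
proof -
  obtain F where F: "finite F" "F \<subseteq> carrier G" "\<And>e. e \<in> E \<Longrightarrow> \<exists>k. \<exists>f\<in>F. e = gpow k \<otimes>\<^bsub>G\<^esub> f"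
    using elementary_closure_finite_over_cyclic by blast
  have "\<exists>m. 1 \<le> m \<and> m \<le> int (card F) \<and> (\<exists>n. u \<otimes>\<^bsub>G\<^esub> gpow m \<otimes>\<^bsub>G\<^esub> inv\<^bsub>G\<^esub> u = gpow n)"
    if u: "u \<in> E" for u
  proof -
    have uc: "u \<in> carrier G" using u by (rule elementary_closure_carrier)
    define h where "h = u \<otimes>\<^bsub>G\<^esub> g \<otimes>\<^bsub>G\<^esub> inv\<^bsub>G\<^esub> u"
    have h_pow: "h [^]\<^bsub>G\<^esub> i = u \<otimes>\<^bsub>G\<^esub> gpow i \<otimes>\<^bsub>G\<^esub> inv\<^bsub>G\<^esub> u" for i :: int
      unfolding h_def by (rule G.conj_int_pow[OF uc g_carrier, symmetric])
    have cover: "\<exists>k. \<exists>f\<in>F. h [^]\<^bsub>G\<^esub> i = gpow k \<otimes>\<^bsub>G\<^esub> f" for i :: int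
      unfolding h_pow
      by (intro F(3) subgroup.m_closed[OF elementary_closure_subgroup]
          inv_in_elementary_closure u gpow_in_elementary_closure)
    have "h \<in> carrier G" unfolding h_def using uc g_carrier by simp
    then have "\<exists>m. 1 \<le> m \<and> m \<le> int (card F) \<and> (\<exists>n. h [^]\<^bsub>G\<^esub> m = gpow n)"
      using G.pigeonhole_power_in_cyclic[OF g_carrier _ F(1,2) cover] by blast
    then show ?thesis unfolding h_pow .
  qed
  then show ?thesis by (rule that)
qed

lemma conj_gpow_nonzero:
  assumes u: "u \<in> carrier G" and e: "u \<otimes>\<^bsub>G\<^esub> gpow m \<otimes>\<^bsub>G\<^esub> inv\<^bsub>G\<^esub> u = gpow n" and "m \<noteq> 0"
  shows "n \<noteq> 0"
proof
  assume "n = 0"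
  then have "gpow m = gpow 0"
    using G.conj_inverse[OF u gpow_carrier e] u by simp
  then show False using gpow_eq_iff \<open>m \<noteq> 0\<close> by blast
qed

lemma conj_exponent_bounded:
  obtains N :: nat where
    "\<And>v m n. v \<in> E \<Longrightarrow> 1 \<le> m \<Longrightarrow> v \<otimes>\<^bsub>G\<^esub> gpow m \<otimes>\<^bsub>G\<^esub> inv\<^bsub>G\<^esub> v = gpow n \<Longrightarrow> \<bar>n\<bar> \<le> int N * m"
proof -
  obtain N :: nat where N: "\<And>u. u \<in> E \<Longrightarrow>
      \<exists>m. 1 \<le> m \<and> m \<le> int N \<and> (\<exists>n. u \<otimes>\<^bsub>G\<^esub> gpow m \<otimes>\<^bsub>G\<^esub> inv\<^bsub>G\<^esub> u = gpow n)"
    using elementary_closure_commensurates by blast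
  have "\<bar>n\<bar> \<le> int N * m"
    if v: "v \<in> E" and m: "1 \<le> m" and e: "v \<otimes>\<^bsub>G\<^esub> gpow m \<otimes>\<^bsub>G\<^esub> inv\<^bsub>G\<^esub> v = gpow n" for v m n
  proof -
    have vc: "v \<in> carrier G" and vi: "inv\<^bsub>G\<^esub> v \<in> E"
      using v elementary_closure_carrier inv_in_elementary_closure by auto
    have vic: "inv\<^bsub>G\<^esub> v \<in> carrier G" using vc by simp
    obtain m' n' where m': "1 \<le> m'" "m' \<le> int N"
      and e': "inv\<^bsub>G\<^esub> v \<otimes>\<^bsub>G\<^esub> gpow m' \<otimes>\<^bsub>G\<^esub> inv\<^bsub>G\<^esub> (inv\<^bsub>G\<^esub> v) = gpow n'"
      using N[OF vi] by blast
    have "n' \<noteq> 0" using conj_gpow_nonzero[OF vic e'] m' by simp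
    have "v \<otimes>\<^bsub>G\<^esub> gpow n' \<otimes>\<^bsub>G\<^esub> inv\<^bsub>G\<^esub> v = gpow m'"
      using G.conj_inverse[OF vic gpow_carrier e'] vc by simp
    then have "gpow (m' * m) = gpow (n * n')"
      using G.conj_pow_scale[OF vc g_carrier, of n' m' m] G.conj_pow_scale[OF vc g_carrier e, of n']
      by (simp add: mult.commute)
    then have "n * n' = m' * m" using gpow_eq_iff by simp
    then have "\<bar>n\<bar> * \<bar>n'\<bar> = m' * m" using m m' by (metis abs_mult abs_of_nonneg mult_nonneg_nonneg order.trans zero_le_one)
    moreover have "\<bar>n\<bar> \<le> \<bar>n\<bar> * \<bar>n'\<bar>"
      using \<open>n' \<noteq> 0\<close> by (simp add: mult_le_cancel_left1 int_one_le_iff_zero_less)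
    moreover have "m' * m \<le> int N * m" using m m' by simp
    ultimately show ?thesis by linarith
  qed
  then show ?thesis using that by blast
qed

text \<open>If \<open>u g\<^sup>m u\<^sup>-\<^sup>1 = g\<^sup>n\<close> with \<open>|n| > m\<close>, iterating gives \<open>u\<^sup>j g\<^bsup>m\<^sup>j\<^esup> u\<^sup>-\<^sup>j = g\<^bsup>n\<^sup>j\<^esup>\<close>, and the
  exponent ratio \<open>|n|\<^sup>j / m\<^sup>j\<close> outgrows the uniform bound \<open>N\<close>.\<close>
lemma conj_exponent_abs_le:
  assumes u: "u \<in> E" and m: "1 \<le> m" and e: "u \<otimes>\<^bsub>G\<^esub> gpow m \<otimes>\<^bsub>G\<^esub> inv\<^bsub>G\<^esub> u = gpow n"
  shows "\<bar>n\<bar> \<le> m"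
proof (rule ccontr)
  assume "\<not> \<bar>n\<bar> \<le> m"
  obtain N :: nat where N: "\<And>v m n. v \<in> E \<Longrightarrow> 1 \<le> m \<Longrightarrow>
      v \<otimes>\<^bsub>G\<^esub> gpow m \<otimes>\<^bsub>G\<^esub> inv\<^bsub>G\<^esub> v = gpow n \<Longrightarrow> \<bar>n\<bar> \<le> int N * m"
    using conj_exponent_bounded by blast
  obtain j where j: "int N * m ^ j < \<bar>n\<bar> ^ j"
    using power_ratio_unbounded[of m "\<bar>n\<bar>" "int N"] m \<open>\<not> \<bar>n\<bar> \<le> m\<close> by auto
  have uc: "u \<in> carrier G" using u by (rule elementary_closure_carrier)
  have "u [^]\<^bsub>G\<^esub> j \<in> E"
    using G.subgroup_int_pow_closed[OF elementary_closure_subgroup u, of "int j"] by (simp add: int_pow_int)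
  moreover have "1 \<le> m ^ j" using m by simp
  ultimately have "\<bar>n ^ j\<bar> \<le> int N * m ^ j"
    using N G.conj_pow_iterate[OF uc g_carrier e, of j] by blast
  then show False using j by (simp add: power_abs)
qed

lemma conj_exponent_abs_eq:
  assumes u: "u \<in> E" and m: "1 \<le> m" and e: "u \<otimes>\<^bsub>G\<^esub> gpow m \<otimes>\<^bsub>G\<^esub> inv\<^bsub>G\<^esub> u = gpow n"
  shows "\<bar>n\<bar> = m"
proof -
  have uc: "u \<in> carrier G" and ui: "inv\<^bsub>G\<^esub> u \<in> E"
    using u elementary_closure_carrier inv_in_elementary_closure by auto
  have uic: "inv\<^bsub>G\<^esub> u \<in> carrier G" using uc by simp
  have "n \<noteq> 0" using conj_gpow_nonzero[OF uc e] m by simp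
  have "inv\<^bsub>G\<^esub> u \<otimes>\<^bsub>G\<^esub> gpow n \<otimes>\<^bsub>G\<^esub> inv\<^bsub>G\<^esub> (inv\<^bsub>G\<^esub> u) = gpow m"
    using G.conj_inverse[OF uc gpow_carrier e] .
  then have "inv\<^bsub>G\<^esub> u \<otimes>\<^bsub>G\<^esub> gpow (n * sgn n) \<otimes>\<^bsub>G\<^esub> inv\<^bsub>G\<^esub> (inv\<^bsub>G\<^esub> u) = gpow (m * sgn n)"
    by (rule G.conj_pow_scale[OF uic g_carrier])
  moreover have "n * sgn n = \<bar>n\<bar>" "\<bar>m * sgn n\<bar> = m" "1 \<le> \<bar>n\<bar>"
    using \<open>n \<noteq> 0\<close> m by (cases "0 < n"; simp add: abs_mult)+
  ultimately have "m \<le> \<bar>n\<bar>" using conj_exponent_abs_le[OF ui] by metis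
  then show ?thesis using conj_exponent_abs_le[OF u m e] by simp
qed

lemma orbit_multiples_hausdorff_A:
  assumes "l \<noteq> 0"
  shows "finite_hausdorff (range (\<lambda>q. \<phi> (gpow (l * q)) base_point)) A"
proof -
  obtain D where D: "\<And>i j. \<bar>i - j\<bar> \<le> \<bar>l\<bar> \<Longrightarrow> dist (\<phi> (gpow i) base_point) (\<phi> (gpow j) base_point) \<le> D"
    using orbit_bounded_steps by blast
  have "range (\<lambda>q. \<phi> (gpow (l * q)) base_point) \<subseteq> A" using gpow_image_A base_point_in_A by blast
  moreover have "\<forall>a\<in>A. \<exists>b\<in>range (\<lambda>q. \<phi> (gpow (l * q)) base_point). dist a b \<le> \<delta> + D"
  proof
    fix a assume "a \<in> A"
    then obtain k where k: "dist (\<phi> (gpow k) base_point) a \<le> \<delta>"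
      using A_cobounded[OF base_point_in_A] by blast
    have "k = l * (k div l) + k mod l" by simp
    then have "\<bar>k - l * (k div l)\<bar> \<le> \<bar>l\<bar>" using abs_mod_less[OF assms, of k] by linarith
    then have "dist (\<phi> (gpow k) base_point) (\<phi> (gpow (l * (k div l))) base_point) \<le> D" by (rule D)
    then have "dist a (\<phi> (gpow (l * (k div l))) base_point) \<le> \<delta> + D"
      using k dist_triangle[of a "\<phi> (gpow (l * (k div l))) base_point" "\<phi> (gpow k) base_point"]
        dist_commute[of a "\<phi> (gpow k) base_point"] by linarith
    then show "\<exists>b\<in>range (\<lambda>q. \<phi> (gpow (l * q)) base_point). dist a b \<le> \<delta> + D" by blast
  qed
  ultimately show ?thesis by (rule finite_hausdorff_subset)
qed

lemma conj_gpow_imp_elementary_closure: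
  assumes u: "u \<in> carrier G" and "m \<noteq> 0" "n \<noteq> 0" and e: "u \<otimes>\<^bsub>G\<^esub> gpow m \<otimes>\<^bsub>G\<^esub> inv\<^bsub>G\<^esub> u = gpow n"
  shows "u \<in> E"
proof -
  have swap: "\<phi> u (\<phi> (gpow (m * q)) x) = \<phi> (gpow (n * q)) (\<phi> u x)" for q x
  proof -
    have "gpow (n * q) \<otimes>\<^bsub>G\<^esub> u = u \<otimes>\<^bsub>G\<^esub> gpow (m * q) \<otimes>\<^bsub>G\<^esub> inv\<^bsub>G\<^esub> u \<otimes>\<^bsub>G\<^esub> u"
      using G.conj_pow_scale[OF u g_carrier e, of q] by simp
    also have "\<dots> = u \<otimes>\<^bsub>G\<^esub> gpow (m * q)" using u by (simp add: G.m_assoc)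
    finally have "u \<otimes>\<^bsub>G\<^esub> gpow (m * q) = gpow (n * q) \<otimes>\<^bsub>G\<^esub> u" ..
    then show ?thesis using act_mult[OF u gpow_carrier] act_mult[OF gpow_carrier u] by metis
  qed
  have "finite_hausdorff (\<phi> u ` A) (\<phi> u ` range (\<lambda>q. \<phi> (gpow (m * q)) base_point))"
    using finite_hausdorff_isometric_image[OF dist_act[OF u] orbit_multiples_hausdorff_A[OF \<open>m \<noteq> 0\<close>]]
    by (simp add: finite_hausdorff_commute)
  moreover have "finite_hausdorff (\<phi> u ` range (\<lambda>q. \<phi> (gpow (m * q)) base_point))
      (range (\<lambda>q. \<phi> (gpow (n * q)) base_point))"
    using finite_hausdorff_range[of "\<lambda>q. \<phi> (gpow (n * q)) (\<phi> u base_point)"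
        "\<lambda>q. \<phi> (gpow (n * q)) base_point" "dist (\<phi> u base_point) base_point"]
    by (simp add: swap image_image dist_act)
  ultimately have "finite_hausdorff (\<phi> u ` A) A"
    using finite_hausdorff_trans orbit_multiples_hausdorff_A[OF \<open>n \<noteq> 0\<close>] by blast
  then show ?thesis unfolding elementary_closure_def using u by blast
qed

text \<open>\<open>M = N!\<close> is divisible by every exponent \<open>m \<le> N\<close> produced by
  \<open>elementary_closure_commensurates\<close>, and conjugation preserves \<open>|m|\<close>.\<close>
lemma elementary_closure_conj_power:
  obtains M where "1 \<le> M"
    and "\<And>u. u \<in> E \<Longrightarrow> \<exists>p\<in>{-1, 1}. u \<otimes>\<^bsub>G\<^esub> gpow M \<otimes>\<^bsub>G\<^esub> inv\<^bsub>G\<^esub> u = gpow (p * M)"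
proof -
  obtain N :: nat where N: "\<And>u. u \<in> E \<Longrightarrow>
      \<exists>m. 1 \<le> m \<and> m \<le> int N \<and> (\<exists>n. u \<otimes>\<^bsub>G\<^esub> gpow m \<otimes>\<^bsub>G\<^esub> inv\<^bsub>G\<^esub> u = gpow n)"
    using elementary_closure_commensurates by blast
  define M where "M = int (fact N)"
  have "\<exists>p\<in>{-1, 1}. u \<otimes>\<^bsub>G\<^esub> gpow M \<otimes>\<^bsub>G\<^esub> inv\<^bsub>G\<^esub> u = gpow (p * M)" if u: "u \<in> E" for u
  proof -
    obtain m n where mn: "1 \<le> m" "m \<le> int N" "u \<otimes>\<^bsub>G\<^esub> gpow m \<otimes>\<^bsub>G\<^esub> inv\<^bsub>G\<^esub> u = gpow n"
      using N[OF u] by blast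
    have "nat m dvd fact N" using mn(1,2) by (intro dvd_fact) auto
    then have "int (nat m) dvd M" unfolding M_def by (simp only: of_nat_dvd_iff)
    then obtain q where q: "M = m * q" using mn(1) by (auto elim: dvdE)
    have "u \<otimes>\<^bsub>G\<^esub> gpow M \<otimes>\<^bsub>G\<^esub> inv\<^bsub>G\<^esub> u = gpow (n * q)"
      unfolding q by (rule G.conj_pow_scale[OF elementary_closure_carrier[OF u] g_carrier mn(3)])
    moreover have "\<bar>n\<bar> = m" using conj_exponent_abs_eq[OF u mn(1,3)] .
    then have "n * q = sgn n * M" "sgn n \<in> {-1, 1}"
      using q mn(1) by (metis mult.assoc mult_sgn_abs, auto simp: sgn_if)
    ultimately show ?thesis by metis
  qed
  moreover have "1 \<le> M" unfolding M_def by simp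
  ultimately show thesis using that by blast
qed

lemma elementary_closure_characterisation:
  obtains M where "1 \<le> M"
    and "\<And>u. u \<in> carrier G \<Longrightarrow>
      u \<in> E \<longleftrightarrow> (\<exists>p\<in>{-1, 1}. u \<otimes>\<^bsub>G\<^esub> gpow M \<otimes>\<^bsub>G\<^esub> inv\<^bsub>G\<^esub> u = gpow (p * M))"
    and "\<And>u. u \<in> carrier G \<Longrightarrow>
      u \<in> E \<longleftrightarrow> (\<exists>m n. m \<noteq> 0 \<and> n \<noteq> 0 \<and> u \<otimes>\<^bsub>G\<^esub> gpow m \<otimes>\<^bsub>G\<^esub> inv\<^bsub>G\<^esub> u = gpow n)"
proof -
  obtain M where "1 \<le> M"
    and I_II: "\<And>u. u \<in> E \<Longrightarrow> \<exists>p\<in>{-1, 1}. u \<otimes>\<^bsub>G\<^esub> gpow M \<otimes>\<^bsub>G\<^esub> inv\<^bsub>G\<^esub> u = gpow (p * M)"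
    using elementary_closure_conj_power by blast
  have II_III: "\<exists>m n. m \<noteq> 0 \<and> n \<noteq> 0 \<and> u \<otimes>\<^bsub>G\<^esub> gpow m \<otimes>\<^bsub>G\<^esub> inv\<^bsub>G\<^esub> u = gpow n"
    if II: "\<exists>p\<in>{-1, 1}. u \<otimes>\<^bsub>G\<^esub> gpow M \<otimes>\<^bsub>G\<^esub> inv\<^bsub>G\<^esub> u = gpow (p * M)" for u
  proof -
    obtain p where p: "p \<in> {-1, 1}" "u \<otimes>\<^bsub>G\<^esub> gpow M \<otimes>\<^bsub>G\<^esub> inv\<^bsub>G\<^esub> u = gpow (p * M)"
      using II by blast
    have "M \<noteq> 0" "p * M \<noteq> 0" using p(1) \<open>1 \<le> M\<close> by auto
    then show ?thesis using p(2) by blast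
  qed
  have "u \<in> E \<longleftrightarrow> (\<exists>p\<in>{-1, 1}. u \<otimes>\<^bsub>G\<^esub> gpow M \<otimes>\<^bsub>G\<^esub> inv\<^bsub>G\<^esub> u = gpow (p * M))"
    and "u \<in> E \<longleftrightarrow> (\<exists>m n. m \<noteq> 0 \<and> n \<noteq> 0 \<and> u \<otimes>\<^bsub>G\<^esub> gpow m \<otimes>\<^bsub>G\<^esub> inv\<^bsub>G\<^esub> u = gpow n)"
    if u: "u \<in> carrier G" for u
  proof -
    have "u \<in> E" if "\<exists>m n. m \<noteq> 0 \<and> n \<noteq> 0 \<and> u \<otimes>\<^bsub>G\<^esub> gpow m \<otimes>\<^bsub>G\<^esub> inv\<^bsub>G\<^esub> u = gpow n"
      using that conj_gpow_imp_elementary_closure[OF u] by blast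
    then show "u \<in> E \<longleftrightarrow> (\<exists>p\<in>{-1, 1}. u \<otimes>\<^bsub>G\<^esub> gpow M \<otimes>\<^bsub>G\<^esub> inv\<^bsub>G\<^esub> u = gpow (p * M))"
      and "u \<in> E \<longleftrightarrow> (\<exists>m n. m \<noteq> 0 \<and> n \<noteq> 0 \<and> u \<otimes>\<^bsub>G\<^esub> gpow m \<otimes>\<^bsub>G\<^esub> inv\<^bsub>G\<^esub> u = gpow n)"
      using I_II II_III by blast+
  qed
  with \<open>1 \<le> M\<close> show thesis by (rule that)
qed

end

theorem mainTheorem16:
  fixes G :: "('g, 'b) monoid_scheme" and \<phi> :: "'g \<Rightarrow> 'x::metric_space \<Rightarrow> 'x"
    and \<Gamma> :: "'x rpath set" and \<mu> \<nu> \<delta> :: real and g :: 'g and A :: "'x set"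
  assumes "path_system_group \<mu> \<nu> G \<phi> \<Gamma>"
    and "constricting_element G \<phi> \<Gamma> \<delta> g A"
  shows "\<exists>\<theta>::real. \<theta> \<ge> 1 \<and> (\<exists>M::int. 1 \<le> M \<and> real_of_int M \<le> \<theta> \<and>
     (\<forall>u\<in>carrier G.
        (u \<in> elementary_closure G \<phi> A \<longleftrightarrow>
           (\<exists>p\<in>{-1, 1::int}. u \<otimes>\<^bsub>G\<^esub> (g [^]\<^bsub>G\<^esub> M) \<otimes>\<^bsub>G\<^esub> inv\<^bsub>G\<^esub> u = g [^]\<^bsub>G\<^esub> (p * M))) \<and>
        (u \<in> elementary_closure G \<phi> A \<longleftrightarrow>
           (\<exists>(m::int) (n::int). m \<noteq> 0 \<and> n \<noteq> 0 \<and>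
              u \<otimes>\<^bsub>G\<^esub> (g [^]\<^bsub>G\<^esub> m) \<otimes>\<^bsub>G\<^esub> inv\<^bsub>G\<^esub> u = g [^]\<^bsub>G\<^esub> n))) \<and>
     finite (rcosets\<^bsub>G\<lparr>carrier := elementary_closure G \<phi> A\<rparr>\<^esub>
               {u \<in> carrier G. u \<otimes>\<^bsub>G\<^esub> (g [^]\<^bsub>G\<^esub> M) \<otimes>\<^bsub>G\<^esub> inv\<^bsub>G\<^esub> u = g [^]\<^bsub>G\<^esub> M}) \<and>
     card (rcosets\<^bsub>G\<lparr>carrier := elementary_closure G \<phi> A\<rparr>\<^esub>
               {u \<in> carrier G. u \<otimes>\<^bsub>G\<^esub> (g [^]\<^bsub>G\<^esub> M) \<otimes>\<^bsub>G\<^esub> inv\<^bsub>G\<^esub> u = g [^]\<^bsub>G\<^esub> M}) \<le> 2)"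
proof -
  interpret constricting_pair \<mu> \<nu> G \<phi> \<Gamma> \<delta> g A
    using assms by unfold_locales
  obtain M where M: "1 \<le> M"
    and I_II: "\<And>u. u \<in> carrier G \<Longrightarrow>
      u \<in> E \<longleftrightarrow> (\<exists>p\<in>{-1, 1}. u \<otimes>\<^bsub>G\<^esub> gpow M \<otimes>\<^bsub>G\<^esub> inv\<^bsub>G\<^esub> u = gpow (p * M))"
    and I_III: "\<And>u. u \<in> carrier G \<Longrightarrow>
      u \<in> E \<longleftrightarrow> (\<exists>m n. m \<noteq> 0 \<and> n \<noteq> 0 \<and> u \<otimes>\<^bsub>G\<^esub> gpow m \<otimes>\<^bsub>G\<^esub> inv\<^bsub>G\<^esub> u = gpow n)"
    by (rule elementary_closure_characterisation) blast
  have "a \<otimes>\<^bsub>G\<^esub> gpow M \<otimes>\<^bsub>G\<^esub> inv\<^bsub>G\<^esub> a \<in> {gpow M, inv\<^bsub>G\<^esub> gpow M}" if "a \<in> E" for a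
    using I_II[OF elementary_closure_carrier[OF that]] that G.int_pow_neg[OF g_carrier, of M] by auto
  note cosets = G.rcosets_centraliser_card_le_two[OF subgroup.subset[OF elementary_closure_subgroup] gpow_carrier this]
  show ?thesis
    using M I_II I_III cosets by (intro exI[of _ "real_of_int M"] conjI exI[of _ M]) auto
qed

end
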